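(* Let $a>1$ and $\mu_1\in(0,1]$ be constants. Let $n$ be sufficiently large and $d\ge n$. Let $X,Y\in\{0,1\}^d$ be independent and uniform, and let $X'=\mathrm{BSC}_{\frac{1-\rho}{2}}(X)$ with $\rho=\sqrt{\frac{2\ln(a\mu_1 n)-\ln\ln n}{d}}$. There exists a constant $\alpha_1>0$ such that $$\Pr\left[\max\{d_H(X,Y),d_H(X',Y)\}\le\frac d2-\frac{3\rho d}{8}\right]\le(\mu_1 n)^{-(1+\alpha_1)}.$$
   Context: $\mathrm{BSC}_p(x)$ denotes the output of the binary symmetric channel on input $x$: each bit of $x$ is flipped independently with probability $p$. $d_H$ denotes Hamming distance. *)

theory Defs
  imports "HOL-Probability.Probability"
begin

text \<open>Bit strings in {0,1}^d are modelled as functions nat => bool that are False outside {..<d}.\<close>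

definition uniform_bits :: "nat \<Rightarrow> (nat \<Rightarrow> bool) pmf" where
  "uniform_bits d = Pi_pmf {..<d} False (\<lambda>_. bernoulli_pmf (1/2))"

definition bsc :: "nat \<Rightarrow> real \<Rightarrow> (nat \<Rightarrow> bool) \<Rightarrow> (nat \<Rightarrow> bool) pmf" where
  "bsc d p x = map_pmf (\<lambda>e i. x i \<noteq> e i) (Pi_pmf {..<d} False (\<lambda>_. bernoulli_pmf p))"

definition hamming :: "nat \<Rightarrow> (nat \<Rightarrow> bool) \<Rightarrow> (nat \<Rightarrow> bool) \<Rightarrow> nat" where
  "hamming d x y = card {i. i < d \<and> x i \<noteq> y i}"

end

theory Submission
  imports Defs "HOL-Real_Asymp.Real_Asymp"
begin

(*
  Score each coordinate by +1 for agreement and -1 for disagreement, once for the pair (X, Y)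
  and once for (X', Y). The event of the theorem forces the total score to be at least 3\<rho>d/2.
  The coordinates are independent and each has moment generating function
  (1 + \<rho>)/2 cosh (2l) + (1 - \<rho>)/2, so the Chernoff bound at l = 3\<rho>/4, together with
  cosh y \<le> 1 + y^2/2 + y^4/12, bounds the probability by exp (-27/50 \<rho>^2 d) as soon as \<rho> \<le> 1/32.
  With the given \<rho> we have \<rho>^2 d = 2 ln (a \<mu>\<^sub>1 n) - ln ln n, and since 27/50 > 1/2 this is at most
  (\<mu>\<^sub>1 n) powr -(1 + 1/25) for large n.
*)

definition agree_sign :: "bool \<Rightarrow> bool \<Rightarrow> real" where
  "agree_sign x y = (if x = y then 1 else -1)"

definition agreement_score :: "nat \<Rightarrow> (nat \<Rightarrow> bool) \<Rightarrow> (nat \<Rightarrow> bool) \<Rightarrow> (nat \<Rightarrow> bool) \<Rightarrow> real" where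
  "agreement_score d x y x' = (\<Sum>i<d. agree_sign (x i) (y i) + agree_sign (x' i) (y i))"

definition correlated_triple_pmf :: "nat \<Rightarrow> real \<Rightarrow> ((nat \<Rightarrow> bool) \<times> (nat \<Rightarrow> bool) \<times> (nat \<Rightarrow> bool)) pmf" where
  "correlated_triple_pmf d \<rho> = do { X \<leftarrow> uniform_bits d; Y \<leftarrow> uniform_bits d; X' \<leftarrow> bsc d ((1 - \<rho>) / 2) X;
     return_pmf (X, Y, X') }"

lemma sum_agree_sign_eq_hamming:
  "(\<Sum>i<d. agree_sign (x i) (y i)) = real d - 2 * real (hamming d x y)"
proof -
  have "(\<Sum>i<d. agree_sign (x i) (y i)) = (\<Sum>i<d. 1 - 2 * of_bool (x i \<noteq> y i))"
    by (intro sum.cong) (auto simp: agree_sign_def)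
  also have "\<dots> = real d - 2 * real (card ({..<d} \<inter> {i. x i \<noteq> y i}))"
    by (simp add: sum_subtractf flip: sum_distrib_left)
  finally show ?thesis
    by (simp add: hamming_def lessThan_def Collect_conj_eq)
qed

lemma agreement_score_eq_hamming:
  "agreement_score d x y x' = 2 * real d - 2 * real (hamming d x y) - 2 * real (hamming d x' y)"
  by (simp add: agreement_score_def sum.distrib sum_agree_sign_eq_hamming)

lemma nn_integral_bernoulli_pmf_real:
  assumes "0 \<le> p" "p \<le> 1" "\<And>x. 0 \<le> f x"
  shows "(\<integral>\<^sup>+x. ennreal (f x) \<partial>bernoulli_pmf p) = ennreal (f True * p + f False * (1 - p))"
  using assms by (simp add: ennreal_mult ennreal_plus)

(*
  If the bit of X is flipped the two signs cancel; otherwise they coincide and the score is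
  \<plusminus>2 with equal probability.
*)
lemma coordinate_mgf:
  assumes "0 \<le> \<rho>" "\<rho> \<le> 1"
  shows "(\<integral>\<^sup>+y. \<integral>\<^sup>+e. ennreal (exp (l * (agree_sign x y + agree_sign (x \<noteq> e) y)))
            \<partial>bernoulli_pmf ((1 - \<rho>) / 2) \<partial>bernoulli_pmf (1 / 2))
         = ennreal ((1 + \<rho>) / 2 * cosh (2 * l) + (1 - \<rho>) / 2)"
proof -
  define g where "g y = exp (l * (agree_sign x y + agree_sign (\<not> x) y)) * ((1 - \<rho>) / 2)
    + exp (l * (agree_sign x y + agree_sign x y)) * (1 - (1 - \<rho>) / 2)" for y
  have inner: "(\<integral>\<^sup>+e. ennreal (exp (l * (agree_sign x y + agree_sign (x \<noteq> e) y)))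
      \<partial>bernoulli_pmf ((1 - \<rho>) / 2)) = ennreal (g y)" for y
    using assms unfolding g_def by (subst nn_integral_bernoulli_pmf_real) auto
  have "(\<integral>\<^sup>+y. ennreal (g y) \<partial>bernoulli_pmf (1 / 2)) = ennreal (g True * (1 / 2) + g False * (1 - 1 / 2))"
    using assms by (intro nn_integral_bernoulli_pmf_real) (auto simp: g_def)
  also have "g True * (1 / 2) + g False * (1 - 1 / 2) = (1 + \<rho>) / 2 * cosh (2 * l) + (1 - \<rho>) / 2"
    by (cases x) (simp_all add: g_def agree_sign_def cosh_def field_simps)
  finally show ?thesis
    by (simp only: inner)
qed

lemma nn_integral_exp_agreement_score:
  assumes "0 \<le> \<rho>" "\<rho> \<le> 1"
  shows "(\<integral>\<^sup>+z. ennreal (exp (l * agreement_score d (fst z) (fst (snd z)) (snd (snd z)))) \<partial>correlated_triple_pmf d \<rho>)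
         = ennreal (((1 + \<rho>) / 2 * cosh (2 * l) + (1 - \<rho>) / 2) ^ d)"
proof -
  define M where "M = (1 + \<rho>) / 2 * cosh (2 * l) + (1 - \<rho>) / 2"
  define f where "f = (\<lambda>x y e. ennreal (exp (l * (agree_sign x y + agree_sign (x \<noteq> e) y))))"
  let ?bits = "\<lambda>p. Pi_pmf {..<d} False (\<lambda>_. bernoulli_pmf p)"
  have "(\<integral>\<^sup>+z. ennreal (exp (l * agreement_score d (fst z) (fst (snd z)) (snd (snd z)))) \<partial>correlated_triple_pmf d \<rho>)
      = (\<integral>\<^sup>+X. \<integral>\<^sup>+Y. \<integral>\<^sup>+E. (\<Prod>i<d. f (X i) (Y i) (E i)) \<partial>?bits ((1 - \<rho>) / 2) \<partial>?bits (1 / 2) \<partial>?bits (1 / 2))"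
    by (simp add: correlated_triple_pmf_def uniform_bits_def bsc_def agreement_score_def f_def
        sum_distrib_left exp_sum prod_ennreal)
  also have "\<dots> = (\<integral>\<^sup>+X. (\<Prod>i<d. \<integral>\<^sup>+y. \<integral>\<^sup>+e. f (X i) y e
        \<partial>bernoulli_pmf ((1 - \<rho>) / 2) \<partial>bernoulli_pmf (1 / 2)) \<partial>?bits (1 / 2))"
  proof -
    have "(\<integral>\<^sup>+E. (\<Prod>i<d. f (X i) (Y i) (E i)) \<partial>?bits ((1 - \<rho>) / 2))
        = (\<Prod>i<d. \<integral>\<^sup>+e. f (X i) (Y i) e \<partial>bernoulli_pmf ((1 - \<rho>) / 2))" for X Y
      by (rule nn_integral_prod_Pi_pmf[where f = "\<lambda>i. f (X i) (Y i)"]) simp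
    moreover have "(\<integral>\<^sup>+Y. (\<Prod>i<d. \<integral>\<^sup>+e. f (X i) (Y i) e \<partial>bernoulli_pmf ((1 - \<rho>) / 2)) \<partial>?bits (1 / 2))
        = (\<Prod>i<d. \<integral>\<^sup>+y. \<integral>\<^sup>+e. f (X i) y e \<partial>bernoulli_pmf ((1 - \<rho>) / 2) \<partial>bernoulli_pmf (1 / 2))" for X
      by (rule nn_integral_prod_Pi_pmf[where f = "\<lambda>i y. \<integral>\<^sup>+e. f (X i) y e \<partial>bernoulli_pmf ((1 - \<rho>) / 2)"]) simp
    ultimately show ?thesis
      by simp
  qed
  also have "\<dots> = (\<integral>\<^sup>+X. ennreal (M ^ d) \<partial>?bits (1 / 2))"
  proof -
    have "0 \<le> M"
      using assms by (simp add: M_def)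
    then show ?thesis
      by (simp only: f_def M_def coordinate_mgf[OF assms] prod_constant) (simp add: ennreal_power M_def)
  qed
  finally show ?thesis
    by (simp add: M_def)
qed

lemma prob_agreement_score_ge:
  assumes "0 \<le> \<rho>" "\<rho> \<le> 1" "0 < l"
  shows "measure_pmf.prob (correlated_triple_pmf d \<rho>) {(x, y, x'). t \<le> agreement_score d x y x'}
         \<le> exp (- l * t) * ((1 + \<rho>) / 2 * cosh (2 * l) + (1 - \<rho>) / 2) ^ d"
proof -
  let ?score = "\<lambda>z. agreement_score d (fst z) (fst (snd z)) (snd (snd z))"
  let ?M = "(1 + \<rho>) / 2 * cosh (2 * l) + (1 - \<rho>) / 2"
  have "emeasure (correlated_triple_pmf d \<rho>) {z \<in> UNIV. t \<le> ?score z}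
      \<le> ennreal (exp (- l * t)) * (\<integral>\<^sup>+z. ennreal (exp (l * ?score z)) * indicator UNIV z \<partial>correlated_triple_pmf d \<rho>)"
    using assms(3) by (intro Chernoff_ineq_nn_integral_ge) auto
  also have "\<dots> = ennreal (exp (- l * t) * ?M ^ d)"
    using assms by (simp add: nn_integral_exp_agreement_score ennreal_mult)
  also have "{z \<in> UNIV. t \<le> ?score z} = {(x, y, x'). t \<le> agreement_score d x y x'}"
    by auto
  finally show ?thesis
    using assms by (simp add: measure_pmf.emeasure_eq_measure)
qed

lemma cosh_le_quartic:
  fixes y :: real
  assumes "\<bar>y\<bar> \<le> 1 / 2"
  shows "cosh y \<le> 1 + y ^ 2 / 2 + y ^ 4 / 12"
proof -
  obtain t1 where t1: "\<bar>t1\<bar> \<le> \<bar>y\<bar>" "exp y = (\<Sum>m<4. y ^ m / fact m) + exp t1 / fact 4 * y ^ 4"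
    using Maclaurin_exp_le[of y 4] by blast
  obtain t2 where t2: "\<bar>t2\<bar> \<le> \<bar>y\<bar>" "exp (- y) = (\<Sum>m<4. (- y) ^ m / fact m) + exp t2 / fact 4 * (- y) ^ 4"
    using Maclaurin_exp_le[of "- y" 4] by auto
  have "exp t1 \<le> 2" "exp t2 \<le> 2"
    using t1(1) t2(1) assms exp_bound_half[of t1] exp_bound_half[of t2] by simp_all
  then have "(exp t1 + exp t2) / 48 * y ^ 4 \<le> 4 / 48 * y ^ 4"
    by (intro mult_right_mono divide_right_mono) auto
  moreover have "cosh y = 1 + y ^ 2 / 2 + (exp t1 + exp t2) / 48 * y ^ 4"
    using t1(2) t2(2) by (simp add: cosh_def numeral_eq_Suc fact_numeral field_simps)
  ultimately show ?thesis
    by simp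
qed

lemma chernoff_exponent_le:
  fixes \<rho> :: real and d :: nat
  assumes "0 \<le> \<rho>" "\<rho> \<le> 1 / 32"
  shows "exp (- (3 * \<rho> / 4) * (3 * \<rho> * real d / 2)) * ((1 + \<rho>) / 2 * cosh (2 * (3 * \<rho> / 4)) + (1 - \<rho>) / 2) ^ d
         \<le> exp (- (27 / 50) * \<rho> ^ 2 * real d)"
proof -
  define y where "y = 3 * \<rho> / 2"
  define M where "M = (1 + \<rho>) / 2 * cosh y + (1 - \<rho>) / 2"
  define B where "B = (1 + \<rho>) / 2 * (y ^ 2 / 2 + y ^ 4 / 12)"
  have "M \<le> (1 + \<rho>) / 2 * (1 + y ^ 2 / 2 + y ^ 4 / 12) + (1 - \<rho>) / 2"
    unfolding M_def using assms cosh_le_quartic[of y] by (intro add_right_mono mult_left_mono) (auto simp: y_def)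
  also have "\<dots> = 1 + B"
    by (simp add: B_def field_simps)
  also have "\<dots> \<le> exp B"
    by (rule exp_ge_add_one_self)
  finally have M_pow: "M ^ d \<le> exp (real d * B)"
    using assms by (simp add: M_def exp_of_nat_mult power_mono)
  have "(1 + \<rho>) * (9 / 16 + 27 * \<rho> ^ 2 / 128) \<le> 9 / 8 - 27 / 50"
  proof -
    have "(1 + \<rho>) * (9 / 16 + 27 * \<rho> ^ 2 / 128) \<le> (1 + 1 / 32) * (9 / 16 + 27 * (1 / 32) ^ 2 / 128)"
      using assms by (intro mult_mono add_left_mono divide_right_mono power_mono) auto
    then show ?thesis
      by (simp add: power2_eq_square)
  qed
  then have "\<rho> ^ 2 * real d * (- 9 / 8 + (1 + \<rho>) * (9 / 16 + 27 * \<rho> ^ 2 / 128)) \<le> \<rho> ^ 2 * real d * (- 27 / 50)"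
    by (intro mult_left_mono) auto
  then have exponent: "- (3 * \<rho> / 4) * (3 * \<rho> * real d / 2) + real d * B \<le> - (27 / 50) * \<rho> ^ 2 * real d"
    unfolding B_def y_def by (simp add: field_simps power_numeral_reduce)
  have "exp (- (3 * \<rho> / 4) * (3 * \<rho> * real d / 2)) * M ^ d
      \<le> exp (- (3 * \<rho> / 4) * (3 * \<rho> * real d / 2)) * exp (real d * B)"
    using M_pow by (rule mult_left_mono) simp
  also have "\<dots> \<le> exp (- (27 / 50) * \<rho> ^ 2 * real d)"
    using exponent by (simp flip: exp_add)
  finally show ?thesis
    by (simp add: M_def y_def)
qed

lemma prob_hamming_both_small_le:
  assumes "0 < \<rho>" "\<rho> \<le> 1 / 32"
  shows "measure_pmf.prob (correlated_triple_pmf d \<rho>)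
           {(X, Y, X'). real (max (hamming d X Y) (hamming d X' Y)) \<le> real d / 2 - 3 * \<rho> * real d / 8}
         \<le> exp (- (27 / 50) * \<rho> ^ 2 * real d)"
proof -
  have "measure_pmf.prob (correlated_triple_pmf d \<rho>)
          {(X, Y, X'). real (max (hamming d X Y) (hamming d X' Y)) \<le> real d / 2 - 3 * \<rho> * real d / 8}
      \<le> measure_pmf.prob (correlated_triple_pmf d \<rho>) {(x, y, x'). 3 * \<rho> * real d / 2 \<le> agreement_score d x y x'}"
    by (intro measure_pmf.finite_measure_mono) (auto simp: agreement_score_eq_hamming)
  also have "\<dots> \<le> exp (- (3 * \<rho> / 4) * (3 * \<rho> * real d / 2))
                 * ((1 + \<rho>) / 2 * cosh (2 * (3 * \<rho> / 4)) + (1 - \<rho>) / 2) ^ d"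
    using assms by (intro prob_agreement_score_ge) auto
  also have "\<dots> \<le> exp (- (27 / 50) * \<rho> ^ 2 * real d)"
    using assms by (intro chernoff_exponent_le) auto
  finally show ?thesis .
qed

lemma exponent_parameter_bounds:
  fixes a \<mu> n d :: real
  assumes "1 < a" "0 < \<mu>" "\<mu> \<le> 1" "3 \<le> n" "n \<le> d"
    and "27 * ln (ln n) \<le> ln n" "ln n / n \<le> 1 / 4096" "4096 * ln a \<le> n" "- 2 * ln \<mu> \<le> ln n"
  defines "q \<equiv> 2 * ln (a * \<mu> * n) - ln (ln n)"
  shows "0 < q" "q / d \<le> (1 / 32) ^ 2" "exp (- (27 / 50) * q) \<le> (\<mu> * n) powr (- (1 + 1 / 25))"
proof -
  have "exp 1 \<le> n"
    using exp_le assms(4) by linarith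
  then have "1 \<le> ln n"
    using assms(4) by (simp add: ln_ge_iff)
  then have lnln: "0 \<le> ln (ln n)"
    by simp
  have ln_\<mu>n: "ln (\<mu> * n) = ln \<mu> + ln n" and ln_a\<mu>n: "ln (a * \<mu> * n) = ln a + ln \<mu> + ln n"
    using assms(1-4) by (simp_all add: ln_mult)
  have "0 < ln a" "ln \<mu> \<le> 0"
    using assms(1-3) by simp_all
  have lnln_small: "27 * ln (ln n) \<le> 2 * ln (\<mu> * n)"
    using assms(6,9) ln_\<mu>n by linarith
  show "0 < q"
    unfolding q_def using \<open>0 < ln a\<close> lnln lnln_small ln_\<mu>n ln_a\<mu>n by linarith
  have "q \<le> 2 * ln a + 2 * ln n"
    unfolding q_def using \<open>ln \<mu> \<le> 0\<close> lnln ln_a\<mu>n by linarith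
  then have "q / d \<le> (2 * ln a + 2 * ln n) / n"
    using \<open>0 < q\<close> assms(4,5) by (intro frac_le) auto
  also have "\<dots> = 2 * (ln a / n) + 2 * (ln n / n)"
    by (simp add: add_divide_distrib)
  also have "\<dots> \<le> (1 / 32) ^ 2"
    using assms(4,7,8) by (simp add: field_simps)
  finally show "q / d \<le> (1 / 32) ^ 2" .
  have "(1 + 1 / 25) * ln (\<mu> * n) \<le> 27 / 50 * q"
    unfolding q_def ln_a\<mu>n using \<open>0 < ln a\<close> lnln_small ln_\<mu>n by (simp add: field_simps)
  then show "exp (- (27 / 50) * q) \<le> (\<mu> * n) powr (- (1 + 1 / 25))"
    using assms(2,4) by (simp add: powr_def)
qed

lemma eventually_exponent_parameter_bounds:
  fixes a \<mu> :: real
  assumes "1 < a" "0 < \<mu>" "\<mu> \<le> 1"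
  defines "q \<equiv> \<lambda>n::nat. 2 * ln (a * \<mu> * real n) - ln (ln (real n))"
  shows "\<forall>\<^sub>F n in sequentially. \<forall>d\<ge>n.
           0 < q n \<and> q n / real d \<le> (1 / 32) ^ 2 \<and> exp (- (27 / 50) * q n) \<le> (\<mu> * real n) powr (- (1 + 1 / 25))"
proof -
  have "\<forall>\<^sub>F n in sequentially. 3 \<le> real n"
    and "\<forall>\<^sub>F n in sequentially. 27 * ln (ln (real n)) \<le> ln (real n)"
    and "\<forall>\<^sub>F n in sequentially. ln (real n) / real n \<le> 1 / 4096"
    and "\<forall>\<^sub>F n in sequentially. 4096 * ln a \<le> real n"
    and "\<forall>\<^sub>F n in sequentially. - 2 * ln \<mu> \<le> ln (real n)"
    by real_asymp+
  then show ?thesis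
  proof eventually_elim
    case (elim n)
    show ?case
    proof (intro allI impI)
      fix d :: nat
      assume "n \<le> d"
      then have "real n \<le> real d"
        by simp
      from exponent_parameter_bounds[OF assms(1-3) elim(1) this elim(2-5)]
      show "0 < q n \<and> q n / real d \<le> (1 / 32) ^ 2 \<and> exp (- (27 / 50) * q n) \<le> (\<mu> * real n) powr (- (1 + 1 / 25))"
        unfolding q_def by blast
    qed
  qed
qed

theorem lemma4p3:
  fixes a \<mu>1 :: real
  assumes "a > 1" and "0 < \<mu>1" and "\<mu>1 \<le> 1"
  shows "\<exists>\<alpha>1>0. \<exists>N::nat. \<forall>n\<ge>N. \<forall>d\<ge>n.
    (let \<rho> = sqrt ((2 * ln (a * \<mu>1 * real n) - ln (ln (real n))) / real d) in
     measure_pmf.prob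
       (do { X \<leftarrow> uniform_bits d; Y \<leftarrow> uniform_bits d; X' \<leftarrow> bsc d ((1 - \<rho>) / 2) X;
             return_pmf (X, Y, X') })
       {(X, Y, X'). real (max (hamming d X Y) (hamming d X' Y)) \<le> real d / 2 - 3 * \<rho> * real d / 8}
     \<le> (\<mu>1 * real n) powr (-(1 + \<alpha>1)))"
proof -
  define q where "q n = 2 * ln (a * \<mu>1 * real n) - ln (ln (real n))" for n :: nat
  obtain N where N: "\<And>n d. N \<le> n \<Longrightarrow> n \<le> d \<Longrightarrow>
      0 < q n \<and> q n / real d \<le> (1 / 32) ^ 2 \<and> exp (- (27 / 50) * q n) \<le> (\<mu>1 * real n) powr (- (1 + 1 / 25))"
    using eventually_exponent_parameter_bounds[OF assms] unfolding eventually_sequentially q_def by blast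
  have bound: "measure_pmf.prob (correlated_triple_pmf d \<rho>)
      {(X, Y, X'). real (max (hamming d X Y) (hamming d X' Y)) \<le> real d / 2 - 3 * \<rho> * real d / 8}
      \<le> (\<mu>1 * real n) powr (- (1 + 1 / 25))"
    if "N \<le> n" "n \<le> d" and \<rho>: "\<rho> = sqrt (q n / real d)" for n d \<rho>
  proof -
    note q = N[OF that(1,2)]
    have "0 < real d"
      using q \<open>n \<le> d\<close> by (cases "d = 0") (auto simp: q_def)
    then have "0 < \<rho>" "\<rho> \<le> 1 / 32" "\<rho> ^ 2 * real d = q n"
      using q real_sqrt_le_mono[of "q n / real d" "(1 / 32) ^ 2"] unfolding \<rho> by auto
    then show ?thesis
      using prob_hamming_both_small_le[of \<rho> d] q by (simp add: mult.assoc)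
  qed
  show ?thesis
    unfolding Let_def
    by (intro exI[of _ "1 / 25"] conjI exI[of _ N] allI impI bound[unfolded correlated_triple_pmf_def q_def]) simp_all
qed

end
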